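(* Let $G$ be a finite loopless multigraph, let $\vec G$ be an orientation of $G$, let $a$ be a positive integer and let $\mathfrak f$ be a fraternal completion of $\vec G$ of depth $a$. Let $c:E(\vec G)\to[N]$ be a colouring of the edges such that $c(e_1)\ne c(e_2)$ for every conflict $(e_1,e_2)$ with $e_1\ne e_2$. Then every cycle $\gamma$ of $G$ receives at least $\min(|\gamma|,a+1)$ distinct colours.
   Context: Let $\vec G$ be a finite loopless directed multigraph and $a$ a positive integer. A fraternal completion of $\vec G$ of depth $a$ is a triple $\mathfrak f=((E_1,\dots,E_a),w,\kappa)$ such that: $E_1=E(\vec G)$; for $2\le i\le a$, $E_i$ is the arc set of a directed multigraph with vertex set $V(\vec G)$; the sets $E_1,\dots,E_a$ are pairwise disjoint (distinct arcs may have the same head and tail); writing $E_{\mathfrak f}=\bigcup_{1\le i\le a}E_i$, the weight $w(e)$ of $e\in E_{\mathfrak f}$ is the $i$ with $e\in E_i$; $\kappa$ maps each $e\in\bigcup_{1<i\le a}E_i$ to a pair $(f,g)\in E_{\mathfrak f}^2$ with ${\rm tail}(f)\ne{\rm tail}(g)$, $w(e)=w(f)+w(g)$, ${\rm tail}(e)={\rm tail}(f)$, ${\rm head}(e)={\rm tail}(g)$, ${\rm head}(f)={\rm head}(g)$; and conversely, for all $i,j$ with $i+j\le a$ and all $f\in E_i$, $g\in E_j$ with ${\rm tail}(f)\ne{\rm tail}(g)$ and ${\rm head}(f)={\rm head}(g)$, there is a unique $e\in E_{i+j}$ with $\kappa(e)\in\{(f,g),(g,f)\}$. Let $\prec$ be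 the partial order on $E_{\mathfrak f}$ obtained as the transitive closure of the relations $f\prec e$ and $g\prec e$ whenever $\kappa(e)=(f,g)$; $f\preceq e$ means $f\prec e$ or $f=e$. Let $\vec H_{\le a}$ be the directed multigraph with vertex set $V(\vec G)$ and arc set $E_{\mathfrak f}$. A pair $(e_1,e_2)$ of arcs of $\vec G$ is a conflict if there exist $f_1,f_2\in E_{\mathfrak f}$ with $f_1\succeq e_1$, $f_2\succeq e_2$, and a directed path of length at most $a$ in $\vec H_{\le a}$ whose first arc is $f_1$ and which ends at an endpoint of $f_2$ (possibly $f_1=f_2$). Cycles of $G$ include $2$-cycles formed by parallel edges; $|\gamma|$ is the number of edges of $\gamma$. *)

theory Defs
  imports Main
begin

definition loopless_digraph :: "'v set \<Rightarrow> 'e set \<Rightarrow> ('e \<Rightarrow> 'v) \<Rightarrow> ('e \<Rightarrow> 'v) \<Rightarrow> bool" where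
  "loopless_digraph V E tail head \<longleftrightarrow> finite V \<and> finite E \<and>
     (\<forall>e\<in>E. tail e \<in> V \<and> head e \<in> V \<and> tail e \<noteq> head e)"

definition comp_arcs :: "(nat \<Rightarrow> 'e set) \<Rightarrow> nat \<Rightarrow> 'e set" where
  "comp_arcs Es a = (\<Union>i\<in>{1..a}. Es i)"

definition comp_weight :: "(nat \<Rightarrow> 'e set) \<Rightarrow> nat \<Rightarrow> 'e \<Rightarrow> nat" where
  "comp_weight Es a e = (THE i. i \<in> {1..a} \<and> e \<in> Es i)"

text \<open>Fraternal completion ((E_1,...,E_a), w, kappa) of depth a of the digraph (V,E,tail,head).
 Arcs of all levels live in the type 'e and share the tail/head maps.\<close>
definition fraternal_completion ::
  "'v set \<Rightarrow> 'e set \<Rightarrow> ('e \<Rightarrow> 'v) \<Rightarrow> ('e \<Rightarrow> 'v) \<Rightarrow> nat \<Rightarrow> (nat \<Rightarrow> 'e set) \<Rightarrow> ('e \<Rightarrow> 'e \<times> 'e) \<Rightarrow> bool" where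
  "fraternal_completion V E tail head a Es \<kappa> \<longleftrightarrow>
     Es 1 = E \<and>
     (\<forall>i\<in>{2..a}. \<forall>e\<in>Es i. tail e \<in> V \<and> head e \<in> V) \<and>
     (\<forall>i\<in>{1..a}. \<forall>j\<in>{1..a}. i \<noteq> j \<longrightarrow> Es i \<inter> Es j = {}) \<and>
     (\<forall>e\<in>(\<Union>i\<in>{2..a}. Es i). \<exists>f g. \<kappa> e = (f, g) \<and>
         f \<in> comp_arcs Es a \<and> g \<in> comp_arcs Es a \<and>
         tail f \<noteq> tail g \<and>
         comp_weight Es a e = comp_weight Es a f + comp_weight Es a g \<and>
         tail e = tail f \<and> head e = tail g \<and> head f = head g) \<and>
     (\<forall>i j f g. 1 \<le> i \<and> 1 \<le> j \<and> i + j \<le> a \<and> f \<in> Es i \<and> g \<in> Es j \<and>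
         tail f \<noteq> tail g \<and> head f = head g \<longrightarrow>
         (\<exists>!e. e \<in> Es (i + j) \<and> (\<kappa> e = (f, g) \<or> \<kappa> e = (g, f))))"

definition prec_gen :: "(nat \<Rightarrow> 'e set) \<Rightarrow> nat \<Rightarrow> ('e \<Rightarrow> 'e \<times> 'e) \<Rightarrow> ('e \<times> 'e) set" where
  "prec_gen Es a \<kappa> = {(f, e). e \<in> (\<Union>i\<in>{2..a}. Es i) \<and> (f = fst (\<kappa> e) \<or> f = snd (\<kappa> e))}"

definition prec_eq :: "(nat \<Rightarrow> 'e set) \<Rightarrow> nat \<Rightarrow> ('e \<Rightarrow> 'e \<times> 'e) \<Rightarrow> 'e \<Rightarrow> 'e \<Rightarrow> bool" where
  "prec_eq Es a \<kappa> f e \<longleftrightarrow> (f, e) \<in> (prec_gen Es a \<kappa>)\<^sup>+ \<or> f = e"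

definition dipath :: "'e set \<Rightarrow> ('e \<Rightarrow> 'v) \<Rightarrow> ('e \<Rightarrow> 'v) \<Rightarrow> 'e list \<Rightarrow> bool" where
  "dipath A tail head p \<longleftrightarrow> p \<noteq> [] \<and> set p \<subseteq> A \<and>
     (\<forall>k. Suc k < length p \<longrightarrow> head (p ! k) = tail (p ! Suc k)) \<and>
     distinct (tail (p ! 0) # map head p)"

definition conflict ::
  "('e \<Rightarrow> 'v) \<Rightarrow> ('e \<Rightarrow> 'v) \<Rightarrow> nat \<Rightarrow> (nat \<Rightarrow> 'e set) \<Rightarrow> ('e \<Rightarrow> 'e \<times> 'e) \<Rightarrow> 'e \<Rightarrow> 'e \<Rightarrow> bool" where
  "conflict tail head a Es \<kappa> e1 e2 \<longleftrightarrow>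
     (\<exists>f1 f2 p. f1 \<in> comp_arcs Es a \<and> f2 \<in> comp_arcs Es a \<and>
        prec_eq Es a \<kappa> e1 f1 \<and> prec_eq Es a \<kappa> e2 f2 \<and>
        dipath (comp_arcs Es a) tail head p \<and> length p \<le> a \<and> p ! 0 = f1 \<and>
        head (last p) \<in> {tail f2, head f2})"

text \<open>A cycle of the underlying undirected multigraph, given by its list of edges es
 (length >= 2, so 2-cycles of parallel edges are included) and cyclic vertex list vs.\<close>
definition is_cycle :: "'e set \<Rightarrow> ('e \<Rightarrow> 'v) \<Rightarrow> ('e \<Rightarrow> 'v) \<Rightarrow> 'e list \<Rightarrow> bool" where
  "is_cycle E tail head es \<longleftrightarrow> 2 \<le> length es \<and> distinct es \<and> set es \<subseteq> E \<and>
     (\<exists>vs. length vs = length es \<and> distinct vs \<and>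
        (\<forall>i<length es. {tail (es ! i), head (es ! i)} = {vs ! i, vs ! ((i + 1) mod length es)}))"

end

theory Submission
  imports Defs
begin

(* Fix a cycle gamma.  We maintain a cyclic chain: distinct vertices
   u_0, ..., u_{m-1} of gamma, arcs f_i of the completion joining u_i and u_{i+1} (indices mod m),
   and pairwise disjoint nonempty sets D_i of edges of gamma partitioning E(gamma), such that
   w(f_i) = |D_i| and every edge of D_i lies below f_i in the order prec.  Initially f_i is the
   i-th edge of gamma and D_i = {f_i}.  If two consecutive arcs f_i, f_{i+1} both point into
   u_{i+1} (a sink), then either m >= 3 and w(f_i) + w(f_{i+1}) <= a, and the fraternal arc of
   f_i and f_{i+1} replaces both (a shorter chain, so induction applies), or D_i and D_{i+1}
   together already form a large conflict clique, as all their edges lie below arcs with a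
   common head.  Without sinks all arcs are oriented the same way around the cycle, and the
   edges below a window of min(m, a + 1) consecutive arcs form a conflict clique, joined by
   directed paths of length at most a along the chain.  A conflict clique is coloured
   injectively, which gives the bound. *)

lemma Suc_mod_neq:
  assumes "2 \<le> (m::nat)" "i < m" shows "Suc i mod m \<noteq> i"
proof (cases "Suc i < m")
  case False
  then have "Suc i = m" using assms by simp
  then show ?thesis using assms by simp
qed simp

lemma add_Suc_mod: "0 < (m::nat) \<Longrightarrow> (r + Suc i mod m) mod m = Suc ((r + i) mod m) mod m"
  by (metis add_Suc_right mod_Suc_eq mod_add_right_eq)

text \<open>Successor indices \<open>1..m\<close> are distinct modulo \<open>m\<close>; needed for backward paths,
  whose first vertex may wrap around to index \<open>0\<close>.\<close>

lemma Suc_mod_inj: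
  "1 \<le> (l::nat) \<Longrightarrow> l \<le> m \<Longrightarrow> 1 \<le> l' \<Longrightarrow> l' \<le> m \<Longrightarrow> l mod m = l' mod m \<Longrightarrow> l = l'"
  by (cases "l = m"; cases "l' = m") auto

lemma nth_0_1_drop_2: "2 \<le> length xs \<Longrightarrow> xs = xs!0 # xs!1 # drop 2 xs"
  by (induction xs rule: induct_list012) auto

lemma chain_dipath:
  assumes "gs \<noteq> []" "set gs \<subseteq> A" "length ws = Suc (length gs)" "distinct ws"
    "\<forall>t<length gs. tail (gs!t) = ws!t \<and> head (gs!t) = ws!Suc t"
  shows "dipath A tail head gs" "head (last gs) = last ws"
proof -
  have eq: "tail (gs!0) # map head gs = ws"
  proof (rule nth_equalityI)
    show "length (tail (gs ! 0) # map head gs) = length ws" using assms by simp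
    fix t assume "t < length (tail (gs ! 0) # map head gs)"
    then show "(tail (gs ! 0) # map head gs) ! t = ws ! t"
      using assms by (cases t) auto
  qed
  show "dipath A tail head gs" unfolding dipath_def using assms eq by auto
  have "ws \<noteq> []" using assms(3) by auto
  then have "last ws = head (gs ! (length gs - 1))"
    using assms(1,3,5) by (simp add: last_conv_nth)
  then show "head (last gs) = last ws" using assms(1) by (simp add: last_conv_nth)
qed

locale completion =
  fixes V :: "'v set" and E :: "'e set" and tail head :: "'e \<Rightarrow> 'v"
    and a :: nat and Es :: "nat \<Rightarrow> 'e set" and \<kappa> :: "'e \<Rightarrow> 'e \<times> 'e"
  assumes loopless: "loopless_digraph V E tail head"
    and depth_pos: "0 < a"
    and fraternal: "fraternal_completion V E tail head a Es \<kappa>"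
begin

lemma level_one: "Es 1 = E"
  using fraternal unfolding fraternal_completion_def by argo

lemma level_arc: "1 \<le> i \<Longrightarrow> i \<le> a \<Longrightarrow> f \<in> Es i \<Longrightarrow> f \<in> comp_arcs Es a"
  unfolding comp_arcs_def by auto

lemma fraternal_arc:
  assumes "1 \<le> i" "1 \<le> j" "i + j \<le> a" "f \<in> Es i" "g \<in> Es j"
    and "tail f \<noteq> tail g" "head f = head g"
  obtains e where "e \<in> Es (i + j)"
    "(tail e = tail f \<and> head e = tail g) \<or> (tail e = tail g \<and> head e = tail f)"
    "(f, e) \<in> prec_gen Es a \<kappa>" "(g, e) \<in> prec_gen Es a \<kappa>"
proof -
  have "\<forall>i j f g. 1 \<le> i \<and> 1 \<le> j \<and> i + j \<le> a \<and> f \<in> Es i \<and> g \<in> Es j \<and>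
      tail f \<noteq> tail g \<and> head f = head g \<longrightarrow>
      (\<exists>!e. e \<in> Es (i + j) \<and> (\<kappa> e = (f, g) \<or> \<kappa> e = (g, f)))"
    using fraternal unfolding fraternal_completion_def by argo
  then have "\<exists>!e. e \<in> Es (i + j) \<and> (\<kappa> e = (f, g) \<or> \<kappa> e = (g, f))"
    using assms by blast
  then obtain e where e: "e \<in> Es (i + j)" "\<kappa> e = (f, g) \<or> \<kappa> e = (g, f)"
    by blast
  have upper: "e \<in> (\<Union>k\<in>{2..a}. Es k)" using e assms by auto
  moreover have "\<forall>e\<in>(\<Union>k\<in>{2..a}. Es k). \<exists>f g. \<kappa> e = (f, g) \<and>
      f \<in> comp_arcs Es a \<and> g \<in> comp_arcs Es a \<and> tail f \<noteq> tail g \<and>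
      comp_weight Es a e = comp_weight Es a f + comp_weight Es a g \<and>
      tail e = tail f \<and> head e = tail g \<and> head f = head g"
    using fraternal unfolding fraternal_completion_def by argo
  ultimately obtain f' g' where "\<kappa> e = (f', g')" "tail e = tail f'" "head e = tail g'"
    by blast
  then have "(tail e = tail f \<and> head e = tail g) \<or> (tail e = tail g \<and> head e = tail f)"
    using e by auto
  moreover have "(f, e) \<in> prec_gen Es a \<kappa>" "(g, e) \<in> prec_gen Es a \<kappa>"
    using upper e unfolding prec_gen_def by auto
  ultimately show ?thesis using that e by blast
qed

lemma prec_eq_step: "prec_eq Es a \<kappa> x f \<Longrightarrow> (f, e) \<in> prec_gen Es a \<kappa> \<Longrightarrow> prec_eq Es a \<kappa> x e"
  unfolding prec_eq_def by (meson trancl.r_into_trancl trancl_into_trancl)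

lemma conflictI:
  assumes "f1 \<in> comp_arcs Es a" "f2 \<in> comp_arcs Es a" "prec_eq Es a \<kappa> x f1" "prec_eq Es a \<kappa> y f2"
    and "dipath (comp_arcs Es a) tail head p" "length p \<le> a" "p ! 0 = f1"
    and "head (last p) \<in> {tail f2, head f2}"
  shows "conflict tail head a Es \<kappa> x y"
  unfolding conflict_def using assms by blast

lemma conflict_via_arc:
  assumes "f \<in> comp_arcs Es a" "g \<in> comp_arcs Es a" "prec_eq Es a \<kappa> x f" "prec_eq Es a \<kappa> y g"
    and "tail f \<noteq> head f" "head f \<in> {tail g, head g}"
  shows "conflict tail head a Es \<kappa> x y"
proof -
  have "dipath (comp_arcs Es a) tail head [f]"
    unfolding dipath_def using assms(1,5) by simp
  then show ?thesis using conflictI[OF assms(1-4)] assms(6) depth_pos by simp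
qed

definition joins :: "'e \<Rightarrow> 'v \<Rightarrow> 'v \<Rightarrow> bool" where
  "joins f x y \<longleftrightarrow> (tail f = x \<and> head f = y) \<or> (tail f = y \<and> head f = x)"

definition piece :: "'e \<Rightarrow> 'e set \<Rightarrow> 'v \<Rightarrow> 'v \<Rightarrow> bool" where
  "piece f D x y \<longleftrightarrow> f \<in> Es (card D) \<and> 1 \<le> card D \<and> card D \<le> a \<and> joins f x y \<and>
     (\<forall>z\<in>D. prec_eq Es a \<kappa> z f)"

lemma pieceD:
  assumes "piece f D x y"
  shows "f \<in> Es (card D)" "1 \<le> card D" "card D \<le> a" "joins f x y"
    "\<And>z. z \<in> D \<Longrightarrow> prec_eq Es a \<kappa> z f" "finite D" "D \<noteq> {}" "f \<in> comp_arcs Es a"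
  using assms unfolding piece_def by (auto intro: level_arc simp: card_ge_0_finite)

lemma edge_piece:
  assumes "e \<in> E" "joins e x y" shows "piece e {e} x y"
  unfolding piece_def using assms level_one depth_pos by (simp add: prec_eq_def)

lemma merge_pieces:
  assumes f: "piece f D x y" and g: "piece g D' y z"
    and heads: "head f = y" "head g = y" and "x \<noteq> z"
    and "D \<inter> D' = {}" and "card D + card D' \<le> a"
  obtains e where "piece e (D \<union> D') x z"
proof -
  have tails: "tail f = x" "tail g = z"
    using pieceD(4)[OF f] pieceD(4)[OF g] heads unfolding joins_def by auto
  have card_union: "card (D \<union> D') = card D + card D'"
    using card_Un_disjoint pieceD(6)[OF f] pieceD(6)[OF g] assms(6) by blast
  obtain e where e: "e \<in> Es (card D + card D')"
      "(tail e = x \<and> head e = z) \<or> (tail e = z \<and> head e = x)"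
      "(f, e) \<in> prec_gen Es a \<kappa>" "(g, e) \<in> prec_gen Es a \<kappa>"
    using fraternal_arc[OF pieceD(2)[OF f] pieceD(2)[OF g] assms(7) pieceD(1)[OF f] pieceD(1)[OF g]]
      tails heads assms(5) by metis
  have "prec_eq Es a \<kappa> w e" if "w \<in> D \<union> D'" for w
    using that pieceD(5)[OF f] pieceD(5)[OF g] prec_eq_step e(3,4) by blast
  then have "piece e (D \<union> D') x z"
    unfolding piece_def joins_def using e(1,2) card_union pieceD(2)[OF f] assms(7) by auto
  then show ?thesis by (rule that)
qed

definition conflict_clique :: "'e set \<Rightarrow> bool" where
  "conflict_clique C \<longleftrightarrow>
     (\<forall>x\<in>C. \<forall>y\<in>C. x \<noteq> y \<longrightarrow> conflict tail head a Es \<kappa> x y \<or> conflict tail head a Es \<kappa> y x)"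

lemma conflict_clique_inj:
  assumes "C \<subseteq> E" "conflict_clique C"
    and "\<forall>e1\<in>E. \<forall>e2\<in>E. conflict tail head a Es \<kappa> e1 e2 \<and> e1 \<noteq> e2 \<longrightarrow> c e1 \<noteq> c e2"
  shows "inj_on c C"
proof (rule inj_onI, rule ccontr)
  fix x y assume xy: "x \<in> C" "y \<in> C" "c x = c y" "x \<noteq> y"
  then have "conflict tail head a Es \<kappa> x y \<or> conflict tail head a Es \<kappa> y x"
    using assms(2) unfolding conflict_clique_def by blast
  moreover have "x \<in> E" "y \<in> E" using assms(1) xy by auto
  ultimately show False using assms(3) xy by metis
qed

definition has_large_clique :: "'e set \<Rightarrow> bool" where
  "has_large_clique S \<longleftrightarrow> (\<exists>C\<subseteq>S. min (card S) (a + 1) \<le> card C \<and> conflict_clique C)"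

end

locale cyclic_chain = completion V E tail head a Es \<kappa>
    for V :: "'v set" and E :: "'e set" and tail head :: "'e \<Rightarrow> 'v"
      and a :: nat and Es :: "nat \<Rightarrow> 'e set" and \<kappa> :: "'e \<Rightarrow> 'e \<times> 'e" +
  fixes fs :: "'e list" and Ds :: "'e set list" and us :: "'v list"
  assumes length_fs: "length fs = length us"
    and length_Ds: "length Ds = length us"
    and two_le_length: "2 \<le> length us"
    and distinct_us: "distinct us"
    and distinct_Ds: "distinct Ds"
    and disjoint_Ds: "pairwise disjnt (set Ds)"
    and piece_at: "i < length us \<Longrightarrow> piece (fs!i) (Ds!i) (us!i) (us!(Suc i mod length us))"
begin

lemma chain_nonempty: "us \<noteq> []"
  using two_le_length by auto

lemma arc_at: "i < length us \<Longrightarrow> fs!i \<in> comp_arcs Es a"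
  using pieceD(8)[OF piece_at] .

lemma disjoint_at: "i < length us \<Longrightarrow> j < length us \<Longrightarrow> i \<noteq> j \<Longrightarrow> Ds!i \<inter> Ds!j = {}"
  using disjoint_Ds distinct_Ds length_Ds
  by (metis disjnt_def nth_eq_iff_index_eq nth_mem pairwiseD)

lemma next_vertex_neq: "i < length us \<Longrightarrow> us!i \<noteq> us!(Suc i mod length us)"
  using nth_eq_iff_index_eq[OF distinct_us] Suc_mod_neq[OF two_le_length] two_le_length
  by (metis mod_less_divisor not_numeral_le_zero not_gr_zero)

lemma arc_loopless: "i < length us \<Longrightarrow> tail (fs!i) \<noteq> head (fs!i)"
  using pieceD(4)[OF piece_at, of i] next_vertex_neq[of i] unfolding joins_def by auto

text \<open>Rotating all three lists gives a chain again; this moves any position to \<open>0\<close>.\<close>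

lemma rotate_chain: "cyclic_chain V E tail head a Es \<kappa> (rotate r fs) (rotate r Ds) (rotate r us)"
proof unfold_locales
  let ?m = "length us"
  have m: "0 < ?m" using two_le_length by linarith
  fix i assume "i < length (rotate r us)"
  then have i: "i < ?m" by simp
  have "rotate r us ! (Suc i mod ?m) = us ! (Suc ((r + i) mod ?m) mod ?m)"
    using m by (simp add: nth_rotate add_Suc_mod)
  moreover have "rotate r fs ! i = fs ! ((r + i) mod ?m)" "rotate r Ds ! i = Ds ! ((r + i) mod ?m)"
    "rotate r us ! i = us ! ((r + i) mod ?m)"
    using i length_fs length_Ds by (simp_all add: nth_rotate)
  ultimately show "piece (rotate r fs ! i) (rotate r Ds ! i) (rotate r us ! i)
      (rotate r us ! (Suc i mod length (rotate r us)))"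
    using piece_at[of "(r + i) mod ?m"] m by simp
qed (use length_fs length_Ds two_le_length distinct_us distinct_Ds disjoint_Ds in simp_all)

definition forward :: "nat \<Rightarrow> bool" where
  "forward t \<longleftrightarrow> tail (fs!t) = us!t \<and> head (fs!t) = us!(Suc t mod length us)"

definition backward :: "nat \<Rightarrow> bool" where
  "backward t \<longleftrightarrow> tail (fs!t) = us!(Suc t mod length us) \<and> head (fs!t) = us!t"

definition sink :: "nat \<Rightarrow> bool" where
  "sink t \<longleftrightarrow> head (fs!t) = us!(Suc t mod length us) \<and>
     head (fs!(Suc t mod length us)) = us!(Suc t mod length us)"

lemma sink_0:
  assumes "sink 0" shows "head (fs!0) = us!1" "head (fs!1) = us!1"
  using assms two_le_length unfolding sink_def by simp_all

lemma merged_sets: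
  defines "D \<equiv> Ds!0 \<union> Ds!1"
  shows "distinct (D # drop 2 Ds)" "pairwise disjnt (set (D # drop 2 Ds))"
proof -
  have "Ds = Ds!0 # Ds!1 # drop 2 Ds"
    using nth_0_1_drop_2[of Ds] two_le_length length_Ds by simp
  then have disj: "pairwise disjnt (insert (Ds!0) (insert (Ds!1) (set (drop 2 Ds))))"
    and dist: "distinct (Ds!0 # Ds!1 # drop 2 Ds)"
    using disjoint_Ds distinct_Ds by (metis list.simps(15))+
  have nonempty: "Ds!0 \<noteq> {}" using pieceD(7)[OF piece_at, of 0] chain_nonempty by simp
  have disjnt_D: "disjnt D X" if "X \<in> set (drop 2 Ds)" for X
    using that disj dist unfolding D_def pairwise_def by (auto simp: disjnt_Un1)
  then have "D \<notin> set (drop 2 Ds)" using nonempty unfolding D_def disjnt_def by blast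
  then show "distinct (D # drop 2 Ds)" "pairwise disjnt (set (D # drop 2 Ds))"
    using dist disj disjnt_D by (auto simp: pairwise_insert disjnt_sym)
qed

lemma contract_chain:
  assumes three: "3 \<le> length us" and e: "piece e (Ds!0 \<union> Ds!1) (us!0) (us!2)"
  shows "cyclic_chain V E tail head a Es \<kappa>
    (e # drop 2 fs) ((Ds!0 \<union> Ds!1) # drop 2 Ds) (us!0 # drop 2 us)"
proof (unfold_locales, simp_all only: merged_sets)
  show "length (e # drop 2 fs) = length (us!0 # drop 2 us)"
    "length ((Ds!0 \<union> Ds!1) # drop 2 Ds) = length (us!0 # drop 2 us)"
    "2 \<le> length (us!0 # drop 2 us)"
    using length_fs length_Ds three by auto
  show "distinct (us!0 # drop 2 us)"
    using distinct_us nth_0_1_drop_2[of us] two_le_length by (metis distinct.simps(2) list.set_intros(2))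
  fix i assume i: "i < length (us!0 # drop 2 us)"
  show "piece ((e # drop 2 fs) ! i) (((Ds!0 \<union> Ds!1) # drop 2 Ds) ! i) ((us!0 # drop 2 us) ! i)
      ((us!0 # drop 2 us) ! (Suc i mod length (us!0 # drop 2 us)))"
  proof (cases i)
    case 0
    then show ?thesis using e three by simp
  next
    case (Suc k)
    define ur where "ur = drop 2 us"
    have len_us: "length us = Suc (Suc (length ur))" using three unfolding ur_def by simp
    have k: "k < length ur" using i Suc unfolding ur_def by simp
    have "(us!0 # ur) ! (Suc i mod length (us!0 # ur)) = us ! (Suc (k + 2) mod length us)"
    proof (cases "Suc k = length ur")
      case True
      then show ?thesis using Suc len_us by simp
    next
      case False
      have "ur ! Suc k = us ! (Suc (k + 2))" unfolding ur_def using three by simp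
      then show ?thesis using Suc k False len_us by simp
    qed
    moreover have "k + 2 < length us" using k len_us by simp
    ultimately show ?thesis
      using piece_at[of "k + 2"] Suc unfolding ur_def by (simp add: length_Ds length_fs)
  qed
qed

lemma merge_sink:
  assumes three: "3 \<le> length us" and "sink 0"
    and weight: "card (Ds!0) + card (Ds!1) \<le> a"
  obtains e where "cyclic_chain V E tail head a Es \<kappa>
    (e # drop 2 fs) ((Ds!0 \<union> Ds!1) # drop 2 Ds) (us!0 # drop 2 us)"
proof -
  have len: "0 < length us" "1 < length us" "2 < length us" using three by auto
  have "us!0 \<noteq> us!2" using nth_eq_iff_index_eq[OF distinct_us len(1,3)] by simp
  moreover have "piece (fs!0) (Ds!0) (us!0) (us!1)" "piece (fs!1) (Ds!1) (us!1) (us!2)"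
    using piece_at[OF len(1)] piece_at[OF len(2)] len by (simp_all add: numeral_2_eq_2)
  moreover have "Ds!0 \<inter> Ds!1 = {}" using disjoint_at[OF len(1,2)] by simp
  ultimately obtain e where "piece e (Ds!0 \<union> Ds!1) (us!0) (us!2)"
    using merge_pieces sink_0[OF \<open>sink 0\<close>] weight by blast
  then show ?thesis using that contract_chain[OF three] by blast
qed

lemma conflict_at_shared_vertex:
  assumes "i < length us" "j < length us" "x \<in> Ds!i" "y \<in> Ds!j"
    and "head (fs!i) \<in> {tail (fs!j), head (fs!j)}"
  shows "conflict tail head a Es \<kappa> x y"
  using conflict_via_arc[OF arc_at arc_at pieceD(5)[OF piece_at] pieceD(5)[OF piece_at]
      arc_loopless] assms by blast

lemma sink_clique:
  assumes "sink 0"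
    and short: "length us = 2 \<or> a < card (Ds!0) + card (Ds!1)"
  shows "has_large_clique (\<Union>(set Ds))"
proof -
  have len: "0 < length us" "1 < length us" using two_le_length by auto
  let ?C = "Ds!0 \<union> Ds!1"
  have "Ds!0 \<in> set Ds" "Ds!1 \<in> set Ds" using len length_Ds by (metis nth_mem)+
  then have sub: "?C \<subseteq> \<Union>(set Ds)" by blast
  have "conflict_clique ?C"
    unfolding conflict_clique_def
  proof (intro ballI impI)
    fix x y assume "x \<in> ?C" "y \<in> ?C"
    then obtain i j where "i \<in> {0, 1}" "j \<in> {0, 1}" "x \<in> Ds!i" "y \<in> Ds!j" by blast
    then show "conflict tail head a Es \<kappa> x y \<or> conflict tail head a Es \<kappa> y x"
      using conflict_at_shared_vertex[of i j x y] sink_0[OF \<open>sink 0\<close>] len by auto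
  qed
  moreover have "min (card (\<Union>(set Ds))) (a + 1) \<le> card ?C"
  proof (cases "length us = 2")
    case True
    then have "Ds = [Ds!0, Ds!1]" using nth_0_1_drop_2[of Ds] length_Ds by simp
    then have "set Ds = {Ds!0, Ds!1}" by (metis list.set(1,2) insert_is_Un sup_bot_right)
    then have "\<Union>(set Ds) = ?C" by simp
    then show ?thesis by simp
  next
    case False
    have "card ?C = card (Ds!0) + card (Ds!1)"
      using card_Un_disjoint pieceD(6)[OF piece_at] disjoint_at len by (metis zero_neq_one)
    then show ?thesis using False short by simp
  qed
  ultimately show ?thesis unfolding has_large_clique_def using sub by blast
qed

lemma forward_or_backward: "t < length us \<Longrightarrow> forward t \<or> backward t"
  using pieceD(4)[OF piece_at] unfolding joins_def forward_def backward_def by blast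

lemma forward_next:
  assumes "t < length us" "\<not> sink t" "forward t"
  shows "forward (Suc t mod length us)"
proof -
  let ?n = "Suc t mod length us"
  have n: "?n < length us" using assms(1) by (intro mod_less_divisor) linarith
  have "head (fs!?n) \<noteq> us!?n" using assms(2,3) unfolding sink_def forward_def by blast
  then show ?thesis using forward_or_backward[OF n] unfolding backward_def by blast
qed

lemma forward_upwards:
  assumes "\<forall>t<length us. \<not> sink t" "forward t" "t \<le> s" "s < length us"
  shows "forward s"
  using assms(3,4,2)
proof (induction s rule: dec_induct)
  case (step n)
  then show ?case using forward_next[of n] assms(1) by simp
qed

text \<open>A chain without sinks is coherently oriented: once an arc runs forward, so do all later
  ones, and via the last arc also the first one.\<close>

lemma orientation:
  assumes no_sink: "\<forall>t<length us. \<not> sink t"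
  shows "(\<forall>t<length us. forward t) \<or> (\<forall>t<length us. backward t)"
proof (cases "\<exists>t<length us. forward t")
  case True
  then obtain t where "t < length us" "forward t" by blast
  then have "forward (length us - 1)" using forward_upwards[OF no_sink] by simp
  moreover have "Suc (length us - 1) mod length us = 0" "length us - 1 < length us"
    using two_le_length by (cases "length us"; simp)+
  ultimately have "forward 0"
    using forward_next[of "length us - 1"] no_sink by metis
  then show ?thesis using forward_upwards[OF no_sink] by blast
next
  case False
  then show ?thesis using forward_or_backward by blast
qed

text \<open>In a forward oriented chain the arcs \<open>i, ..., j - 1\<close> form a directed path of length
  \<open>j - i\<close> from an arc above \<open>x \<in> Ds!i\<close> to the tail of the arc above \<open>y \<in> Ds!j\<close>.\<close>

lemma conflict_forward:
  assumes fw: "\<forall>t<length us. forward t"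
    and ij: "i < j" "j < length us" "j - i \<le> a" and x: "x \<in> Ds!i" and y: "y \<in> Ds!j"
  shows "conflict tail head a Es \<kappa> x y"
proof -
  let ?gs = "map (nth fs) [i..<j]" and ?ws = "map (nth us) [i..<Suc j]"
  have "set ?gs \<subseteq> comp_arcs Es a" using arc_at ij by auto
  moreover have "inj_on (nth us) {i..<Suc j}" using ij by (intro inj_on_nth[OF distinct_us]) auto
  then have "distinct ?ws" by (simp add: distinct_map del: upt_Suc)
  moreover have "\<forall>t<length ?gs. tail (?gs!t) = ?ws!t \<and> head (?gs!t) = ?ws!Suc t"
  proof (intro allI impI)
    fix t assume t: "t < length ?gs"
    then have "Suc (i + t) < length us" using ij by auto
    then show "tail (?gs!t) = ?ws!t \<and> head (?gs!t) = ?ws!Suc t"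
      using fw t unfolding forward_def by (simp del: upt_Suc)
  qed
  moreover have "?gs \<noteq> []" using ij by simp
  ultimately have path: "dipath (comp_arcs Es a) tail head ?gs" "head (last ?gs) = us!j"
    using chain_dipath[of ?gs _ ?ws] ij by auto
  have "head (last ?gs) = tail (fs!j)" using path(2) fw ij unfolding forward_def by simp
  then show ?thesis
    using conflictI[OF arc_at arc_at pieceD(5)[OF piece_at x] pieceD(5)[OF piece_at y] path(1)] ij
    by simp
qed

text \<open>Symmetrically, in a backward oriented chain the arcs \<open>j, ..., i + 1\<close> form a directed path
  from the arc above \<open>y \<in> Ds!j\<close> to the tail of the arc above \<open>x \<in> Ds!i\<close>.\<close>

lemma conflict_backward:
  assumes bw: "\<forall>t<length us. backward t"
    and ij: "i < j" "j < length us" "j - i \<le> a" and x: "x \<in> Ds!i" and y: "y \<in> Ds!j"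
  shows "conflict tail head a Es \<kappa> y x"
proof -
  let ?m = "length us"
  let ?gs = "map (\<lambda>t. fs!(j - t)) [0..<j-i]"
    and ?ws = "map (\<lambda>t. us!(Suc (j - t) mod ?m)) [0..<Suc (j-i)]"
  have "set ?gs \<subseteq> comp_arcs Es a" using arc_at ij by auto
  moreover have "inj_on (\<lambda>t. us!(Suc (j - t) mod ?m)) {0..<Suc (j-i)}"
  proof (rule inj_onI)
    fix t t' assume tt: "t \<in> {0..<Suc (j-i)}" "t' \<in> {0..<Suc (j-i)}"
      and eq: "us!(Suc (j - t) mod ?m) = us!(Suc (j - t') mod ?m)"
    have "0 < ?m" using ij by linarith
    then have "Suc (j - t) mod ?m = Suc (j - t') mod ?m"
      using nth_eq_iff_index_eq[OF distinct_us] eq by simp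
    then have "Suc (j - t) = Suc (j - t')"
      using Suc_mod_inj[of "Suc (j - t)" ?m "Suc (j - t')"] tt ij by simp
    then show "t = t'" using tt ij by simp
  qed
  then have "distinct ?ws" by (simp add: distinct_map del: upt_Suc)
  moreover have "\<forall>t<length ?gs. tail (?gs!t) = ?ws!t \<and> head (?gs!t) = ?ws!Suc t"
  proof (intro allI impI)
    fix t assume t: "t < length ?gs"
    then have "j - t < ?m" "Suc (j - Suc t) = j - t" using ij by auto
    then show "tail (?gs!t) = ?ws!t \<and> head (?gs!t) = ?ws!Suc t"
      using bw t unfolding backward_def by (simp del: upt_Suc)
  qed
  moreover have "?gs \<noteq> []" using ij by simp
  ultimately have path: "dipath (comp_arcs Es a) tail head ?gs" "head (last ?gs) = last ?ws"
    using chain_dipath[of ?gs _ ?ws] by auto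
  have "last ?ws = us!(Suc i mod ?m)" using ij by (simp add: last_map)
  then have "head (last ?gs) = tail (fs!i)" using path(2) bw ij unfolding backward_def by simp
  then show ?thesis
    using conflictI[OF arc_at arc_at pieceD(5)[OF piece_at y] pieceD(5)[OF piece_at x] path(1)] ij
    by simp
qed

lemma oriented_conflict:
  assumes "(\<forall>t<length us. forward t) \<or> (\<forall>t<length us. backward t)"
    and "i < j" "j < length us" "j - i \<le> a" "x \<in> Ds!i" "y \<in> Ds!j"
  shows "conflict tail head a Es \<kappa> x y \<or> conflict tail head a Es \<kappa> y x"
  using assms(1) conflict_forward[OF _ assms(2-6)] conflict_backward[OF _ assms(2-6)] by blast

lemma window_clique:
  assumes oriented: "(\<forall>t<length us. forward t) \<or> (\<forall>t<length us. backward t)"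
  shows "has_large_clique (\<Union>(set Ds))"
proof -
  define k where "k = min (length us) (a + 1)"
  define C where "C = (\<Union>t<k. Ds!t)"
  have k: "k \<le> length us" "k \<le> a + 1" unfolding k_def by auto
  have "Ds!t \<in> set Ds" if "t < k" for t using that k length_Ds by simp
  then have "C \<subseteq> \<Union>(set Ds)" unfolding C_def by blast
  moreover have "conflict_clique C"
    unfolding conflict_clique_def
  proof (intro ballI impI)
    fix x y assume "x \<in> C" "y \<in> C"
    then obtain i j where ij: "i < k" "j < k" "x \<in> Ds!i" "y \<in> Ds!j" unfolding C_def by blast
    then have m: "i < length us" "j < length us" using k by auto
    show "conflict tail head a Es \<kappa> x y \<or> conflict tail head a Es \<kappa> y x"
    proof (cases i j rule: linorder_cases)
      case less
      have "j - i \<le> a" using ij k by simp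
      then show ?thesis using oriented_conflict[OF oriented less m(2) _ ij(3,4)] by blast
    next
      case equal
      then show ?thesis using conflict_at_shared_vertex[OF m] ij by simp
    next
      case greater
      have "i - j \<le> a" using ij k by simp
      then show ?thesis using oriented_conflict[OF oriented greater m(1) _ ij(4,3)] by blast
    qed
  qed
  moreover have "min (card (\<Union>(set Ds))) (a + 1) \<le> card C"
  proof (cases "length us \<le> a + 1")
    case True
    then have "C = \<Union>(set Ds)" unfolding C_def k_def using length_Ds by (auto simp: set_conv_nth)
    then show ?thesis by simp
  next
    case False
    have "card C = (\<Sum>t<k. card (Ds!t))"
      unfolding C_def using k pieceD(6)[OF piece_at] disjoint_at by (intro card_UN_disjoint) auto
    also have "\<dots> \<ge> (\<Sum>t<k. 1)" using k pieceD(2)[OF piece_at] by (intro sum_mono) auto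
    finally show ?thesis using False unfolding k_def by simp
  qed
  ultimately show ?thesis unfolding has_large_clique_def by blast
qed

end

context completion
begin

text \<open>Every chain carries a large clique, by induction on its length: rotate a sink to
  position \<open>0\<close> and merge there if possible, otherwise use the sink or window cliques.\<close>

lemma chain_clique:
  "cyclic_chain V E tail head a Es \<kappa> fs Ds us \<Longrightarrow> has_large_clique (\<Union>(set Ds))"
proof (induction "length us" arbitrary: fs Ds us rule: less_induct)
  case less
  interpret C: cyclic_chain V E tail head a Es \<kappa> fs Ds us by (rule less.prems)
  show ?case
  proof (cases "\<exists>i<length us. C.sink i")
    case False
    then show ?thesis using C.window_clique[OF C.orientation] by blast
  next
    case True
    then obtain i where i: "i < length us" "C.sink i" by blast
    interpret R: cyclic_chain V E tail head a Es \<kappa> "rotate i fs" "rotate i Ds" "rotate i us"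
      by (rule C.rotate_chain)
    have len: "0 < length us" "1 < length us" using C.two_le_length by auto
    have sink: "R.sink 0"
      using i len C.length_fs unfolding C.sink_def R.sink_def by (simp add: nth_rotate mod_Suc_eq)
    show ?thesis
    proof (cases "3 \<le> length us \<and> card (rotate i Ds ! 0) + card (rotate i Ds ! 1) \<le> a")
      case True
      let ?Ds = "rotate i Ds"
      obtain e where merged: "cyclic_chain V E tail head a Es \<kappa> (e # drop 2 (rotate i fs))
          ((?Ds!0 \<union> ?Ds!1) # drop 2 ?Ds) (rotate i us ! 0 # drop 2 (rotate i us))"
        using R.merge_sink sink True by auto
      have "?Ds = ?Ds!0 # ?Ds!1 # drop 2 ?Ds"
        using R.length_Ds C.two_le_length by (intro nth_0_1_drop_2) simp
      then have "\<Union>(set ((?Ds!0 \<union> ?Ds!1) # drop 2 ?Ds)) = \<Union>(set Ds)"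
        by (metis Sup_insert list.simps(15) set_rotate sup_assoc)
      moreover have "length (rotate i us ! 0 # drop 2 (rotate i us)) < length us" using len by simp
      ultimately show ?thesis using less.hyps[OF _ merged] by simp
    next
      case False
      then have "length (rotate i us) = 2 \<or> a < card (rotate i Ds ! 0) + card (rotate i Ds ! 1)"
        using C.two_le_length by auto
      then show ?thesis using R.sink_clique[OF sink] by simp
    qed
  qed
qed

lemma cycle_chain:
  assumes "is_cycle E tail head \<gamma>"
  obtains us where "cyclic_chain V E tail head a Es \<kappa> \<gamma> (map (\<lambda>e. {e}) \<gamma>) us"
proof -
  obtain us where us: "length us = length \<gamma>" "distinct us"
    "\<forall>i<length \<gamma>. {tail (\<gamma>!i), head (\<gamma>!i)} = {us!i, us!((i + 1) mod length \<gamma>)}"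
    using assms unfolding is_cycle_def by blast
  have \<gamma>: "2 \<le> length \<gamma>" "distinct \<gamma>" "set \<gamma> \<subseteq> E" using assms unfolding is_cycle_def by auto
  show ?thesis
  proof (rule that, rule cyclic_chain.intro[OF completion_axioms], unfold_locales)
    show "length \<gamma> = length us" "length (map (\<lambda>e. {e}) \<gamma>) = length us" "2 \<le> length us"
      "distinct us" using us \<gamma> by simp_all
    show "distinct (map (\<lambda>e. {e}) \<gamma>)" using \<gamma> by (simp add: distinct_map)
    show "pairwise disjnt (set (map (\<lambda>e. {e}) \<gamma>))" by (auto simp: pairwise_def)
  next
    fix i assume i: "i < length us"
    then have e: "\<gamma>!i \<in> E" using us \<gamma> by (metis nth_mem subsetD)
    then have "tail (\<gamma>!i) \<noteq> head (\<gamma>!i)" using loopless unfolding loopless_digraph_def by blast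
    then have "joins (\<gamma>!i) (us!i) (us!(Suc i mod length us))"
      using us i unfolding joins_def by (auto simp: doubleton_eq_iff)
    then show "piece (\<gamma>!i) (map (\<lambda>e. {e}) \<gamma> ! i) (us!i) (us!(Suc i mod length us))"
      using edge_piece[OF e] i us by simp
  qed
qed

end

theorem mainTheorem9:
  fixes V :: "'v set" and E :: "'e set" and tail head :: "'e \<Rightarrow> 'v"
    and a N :: nat and Es :: "nat \<Rightarrow> 'e set" and \<kappa> :: "'e \<Rightarrow> 'e \<times> 'e"
    and c :: "'e \<Rightarrow> nat" and \<gamma> :: "'e list"
  assumes "loopless_digraph V E tail head"
    and "0 < a"
    and "fraternal_completion V E tail head a Es \<kappa>"
    and "\<forall>e\<in>E. c e \<in> {1..N}"
    and "\<forall>e1\<in>E. \<forall>e2\<in>E. conflict tail head a Es \<kappa> e1 e2 \<and> e1 \<noteq> e2 \<longrightarrow> c e1 \<noteq> c e2"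
    and "is_cycle E tail head \<gamma>"
  shows "min (length \<gamma>) (a + 1) \<le> card (c ` set \<gamma>)"
proof -
  interpret completion V E tail head a Es \<kappa> using assms(1-3) by unfold_locales
  have \<gamma>: "distinct \<gamma>" "set \<gamma> \<subseteq> E" using assms(6) unfolding is_cycle_def by auto
  obtain us where "cyclic_chain V E tail head a Es \<kappa> \<gamma> (map (\<lambda>e. {e}) \<gamma>) us"
    using cycle_chain[OF assms(6)] .
  then have "has_large_clique (set \<gamma>)" using chain_clique by fastforce
  then obtain C where C: "C \<subseteq> set \<gamma>" "min (length \<gamma>) (a + 1) \<le> card C" "conflict_clique C"
    unfolding has_large_clique_def using distinct_card[OF \<gamma>(1)] by auto
  have "inj_on c C" using conflict_clique_inj[OF _ C(3) assms(5)] C(1) \<gamma>(2) by blast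
  then have "card C = card (c ` C)" by (simp add: card_image)
  also have "\<dots> \<le> card (c ` set \<gamma>)" using C(1) by (intro card_mono) auto
  finally show ?thesis using C(2) by simp
qed

end
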